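(* Let $\mathbf{P}=\{p_n(x)\}_{n\ge0}$ be the Sheffer sequence for the pair $(g(t),f(t))$. Then, as formal power series in $t$ (with coefficients rational functions of $x$), $$\sum_{n=0}^{\infty}A_n(x;\mathbf{P})\frac{t^n}{n!}=\frac{(1-x)\,e^{\bar f((1-x)t)}}{g\big(\bar f((1-x)t)\big)}\cdot\frac{1}{1-x\,e^{\bar f((1-x)t)}}.$$
   Context: $g,f$ are formal power series over $\mathbb{C}$ with $g(0)\ne0$, $f(0)=0$, $f'(0)\ne0$; $\bar f$ is the compositional inverse of $f$. $\{p_n\}$ is Sheffer for $(g,f)$ iff $\sum_{n\ge0}p_n(x)\frac{t^n}{n!}=\frac{1}{g(\bar f(t))}e^{x\bar f(t)}$. The Eulerian numbers $A_{n,k}(\mathbf{P})$ ($0\le k\le n$) are the unique coefficients with $p_n(x)=\sum_{k=0}^{n}A_{n,k}(\mathbf{P})\binom{x+n-k-1}{n}$, where $\binom{y}{n}=y(y-1)\cdots(y-n+1)/n!$, and $A_n(x;\mathbf{P})=\sum_{k=0}^n A_{n,k}(\mathbf{P})x^k$. *)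

theory Defs
  imports "HOL-Computational_Algebra.Computational_Algebra"
begin

text \<open>The identity is required for every complex value of x,
  which (coefficientwise) is the same as an identity of polynomials in x.\<close>
definition sheffer :: "complex fps \<Rightarrow> complex fps \<Rightarrow> (nat \<Rightarrow> complex poly) \<Rightarrow> bool" where
  "sheffer g f p \<longleftrightarrow>
     (\<forall>x::complex. Abs_fps (\<lambda>n. poly (p n) x / of_nat (fact n))
        = inverse (g oo fps_inv f) * (fps_exp x oo fps_inv f))"

definition eulerian :: "(nat \<Rightarrow> complex poly) \<Rightarrow> nat \<Rightarrow> nat \<Rightarrow> complex" where
  "eulerian p n =
     (THE a. (\<forall>k>n. a k = 0) \<and>
        (\<forall>x::complex. poly (p n) x =
           (\<Sum>k\<le>n. a k * ((x + of_nat n - of_nat k - 1) gchoose n))))"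

definition eulerian_poly :: "(nat \<Rightarrow> complex poly) \<Rightarrow> nat \<Rightarrow> complex poly" where
  "eulerian_poly p n = (\<Sum>k\<le>n. monom (eulerian p n k) k)"

type_synonym ratfun = "complex poly fract"

definition ratfun_x :: ratfun where
  "ratfun_x = to_fract [:0, 1:]"

definition lift_fps :: "complex fps \<Rightarrow> ratfun fps" where
  "lift_fps a = Abs_fps (\<lambda>n. to_fract [:a $ n:])"

end

theory Submission
  imports Defs
begin

text \<open>
  Put s = (1 - x) t and let fbar be the compositional inverse of f. The Sheffer property at
  y = m + 1 says sum_n p_n(m+1) s^n/n! = e^((m+1) fbar(s)) / g(fbar(s)), while expanding p_n in
  the basis binom(y+n-k-1, n) gives sum_(m>=0) p_n(m+1) x^m = A_n(x) / (1-x)^(n+1).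
  Multiplying the first identity by (1 - x) x^m and summing over m turns the left side into the
  exponential generating function of the A_n(x) and the right side into a geometric series in
  x e^(fbar(s)). To avoid convergence questions in C(x)[[t]], everything is done over C[x]: the
  sum over m < N agrees with the Eulerian side modulo x^N in every coefficient, so the
  discrepancy is divisible by all powers of x and vanishes. The identity is then mapped into
  the fraction field, where the two denominators can be inverted.
\<close>

section \<open>Coefficientwise homomorphisms of power series\<close>

locale comm_ring_hom =
  fixes hom :: "'a::comm_ring_1 \<Rightarrow> 'b::comm_ring_1"
  assumes hom_add: "hom (x + y) = hom x + hom y"
    and hom_mult: "hom (x * y) = hom x * hom y"
    and hom_one: "hom 1 = 1"
begin

lemma hom_zero: "hom 0 = 0"
  using hom_add[of 0 0] by simp

lemma hom_diff: "hom (x - y) = hom x - hom y"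
  using hom_add[of "x - y" y] by (simp add: eq_diff_eq)

lemma hom_sum: "hom (sum f A) = (\<Sum>x\<in>A. hom (f x))"
  by (induction A rule: infinite_finite_induct) (auto simp: hom_zero hom_add)

lemma hom_power: "hom (x ^ n) = hom x ^ n"
  by (induction n) (auto simp: hom_one hom_mult)

lemma hom_of_nat: "hom (of_nat n) = of_nat n"
  by (induction n) (auto simp: hom_zero hom_one hom_add)

end

definition fps_map :: "('a \<Rightarrow> 'b) \<Rightarrow> 'a fps \<Rightarrow> 'b fps" where
  "fps_map h a = Abs_fps (\<lambda>n. h (a $ n))"

lemma fps_map_nth [simp]: "fps_map h a $ n = h (a $ n)"
  by (simp add: fps_map_def)

lemma fps_map_fps_map: "fps_map h (fps_map h' a) = fps_map (h \<circ> h') a"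
  by (simp add: fps_eq_iff)

context comm_ring_hom
begin

lemma fps_map_diff: "fps_map hom (a - b) = fps_map hom a - fps_map hom b"
  by (simp add: fps_eq_iff hom_diff)

lemma fps_map_mult: "fps_map hom (a * b) = fps_map hom a * fps_map hom b"
  by (simp add: fps_eq_iff fps_mult_nth hom_sum hom_mult)

lemma fps_map_const: "fps_map hom (fps_const c) = fps_const (hom c)"
  by (simp add: fps_eq_iff hom_zero)

lemma fps_map_one: "fps_map hom 1 = 1"
  using fps_map_const[of 1] by (simp add: hom_one)

lemma fps_map_X: "fps_map hom fps_X = fps_X"
  by (simp add: fps_eq_iff fps_X_nth hom_zero hom_one)

lemma fps_map_power: "fps_map hom (a ^ n) = fps_map hom a ^ n"
  by (induction n) (simp_all add: fps_map_one fps_map_mult)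

lemma fps_map_compose: "fps_map hom (a oo b) = fps_map hom a oo fps_map hom b"
  by (simp add: fps_eq_iff fps_compose_nth hom_sum hom_mult flip: fps_map_power)

end

locale field_hom = comm_ring_hom hom for hom :: "'a::field \<Rightarrow> 'b::field"
begin

lemma hom_inverse: "hom (inverse x) = inverse (hom x)"
proof (cases "x = 0")
  case False
  then have "hom x * hom (inverse x) = 1"
    by (simp flip: hom_mult add: hom_one)
  then show ?thesis
    by (rule inverse_unique[symmetric])
qed (simp add: hom_zero)

lemma fps_map_exp: "fps_map hom (fps_exp c) = fps_exp (hom c)"
proof -
  have "hom (c ^ n / of_nat (fact n)) = hom c ^ n / of_nat (fact n)" for n
    using hom_of_nat[of "fact n"]
    by (simp add: divide_inverse hom_mult hom_inverse hom_power)
  then show ?thesis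
    by (simp add: fps_eq_iff)
qed

end

section \<open>Truncated binomial series\<close>

lemma one_minus_mult_binomial_sum:
  fixes x :: "'a::comm_ring_1"
  shows "(1 - x) * (\<Sum>j<M. of_nat ((j + Suc n) choose Suc n) * x ^ j)
       = (\<Sum>j<M. of_nat ((j + n) choose n) * x ^ j) - of_nat ((M + n) choose Suc n) * x ^ M"
proof (induction M)
  case (Suc M)
  have pascal: "(M + Suc n) choose Suc n = ((M + n) choose n) + ((M + n) choose Suc n)"
    by simp
  have "(1 - x) * (\<Sum>j<Suc M. of_nat ((j + Suc n) choose Suc n) * x ^ j)
      = (\<Sum>j<M. of_nat ((j + n) choose n) * x ^ j) - of_nat ((M + n) choose Suc n) * x ^ M
        + (1 - x) * ((of_nat ((M + n) choose n) + of_nat ((M + n) choose Suc n)) * x ^ M)"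
    by (simp only: sum.lessThan_Suc distrib_left Suc.IH pascal of_nat_add)
  also have "\<dots> = (\<Sum>j<Suc M. of_nat ((j + n) choose n) * x ^ j)
      - of_nat ((Suc M + n) choose Suc n) * x ^ Suc M"
    by (simp add: algebra_simps)
  finally show ?case .
qed (simp add: binomial_eq_0)

lemma binomial_sum_truncation:
  fixes x :: "'a::comm_ring_1"
  shows "x ^ M dvd 1 - (1 - x) ^ Suc n * (\<Sum>j<M. of_nat ((j + n) choose n) * x ^ j)"
proof (induction n)
  case 0
  show ?case
    by (simp flip: one_diff_power_eq)
next
  case (Suc n)
  have split: "1 - (1 - x) ^ Suc (Suc n) * (\<Sum>j<M. of_nat ((j + Suc n) choose Suc n) * x ^ j)
      = (1 - (1 - x) ^ Suc n * (\<Sum>j<M. of_nat ((j + n) choose n) * x ^ j))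
        + x ^ M * ((1 - x) ^ Suc n * of_nat ((M + n) choose Suc n))"
    unfolding power_Suc2[of "1 - x" "Suc n"] mult.assoc one_minus_mult_binomial_sum
    by (simp add: algebra_simps)
  show ?case
    unfolding split by (intro dvd_add Suc.IH dvd_triv_left)
qed

lemma shifted_binomial_sum_truncation:
  fixes x :: "'a::comm_ring_1"
  assumes "k \<le> n"
  shows "x ^ N dvd x ^ k - (1 - x) ^ Suc n * (\<Sum>m<N. of_nat ((m + n - k) choose n) * x ^ m)"
proof -
  let ?c = "\<lambda>m. of_nat ((m + n - k) choose n) * x ^ m"
  have vanish: "?c m = 0" if "m < k" for m
    using that assms by (simp add: binomial_eq_0)
  show ?thesis
  proof (cases "N \<le> k")
    case True
    then have "(\<Sum>m<N. ?c m) = 0"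
      using vanish by (intro sum.neutral) auto
    then show ?thesis
      using True by (simp add: le_imp_power_dvd)
  next
    case False
    have "(\<Sum>m<N. ?c m) = (\<Sum>m<k. ?c m) + (\<Sum>m=k..<N. ?c m)"
      using False by (simp add: lessThan_atLeast0 sum.atLeastLessThan_concat)
    also have "(\<Sum>m=k..<N. ?c m) = (\<Sum>j<N - k. ?c (j + k))"
      using False sum.shift_bounds_nat_ivl[of ?c 0 k "N - k"] by (simp add: lessThan_atLeast0)
    also have "\<dots> = x ^ k * (\<Sum>j<N - k. of_nat ((j + n) choose n) * x ^ j)"
      by (simp add: sum_distrib_left power_add mult_ac)
    finally have "x ^ k - (1 - x) ^ Suc n * (\<Sum>m<N. ?c m)
        = x ^ k * (1 - (1 - x) ^ Suc n * (\<Sum>j<N - k. of_nat ((j + n) choose n) * x ^ j))"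
      using vanish by (simp add: algebra_simps)
    moreover have "x ^ N = x ^ k * x ^ (N - k)"
      using False by (simp flip: power_add)
    ultimately show ?thesis
      by (metis mult_dvd_mono dvd_refl binomial_sum_truncation)
  qed
qed

lemma geometric_sum_telescope:
  fixes x e :: "'a::comm_ring_1"
  shows "(\<Sum>m<N. x ^ m * e ^ Suc m) * (1 - x * e) = e - x ^ N * e ^ Suc N"
proof -
  have "(\<Sum>m<N. x ^ m * e ^ Suc m) = e * (\<Sum>m<N. (x * e) ^ m)"
    by (simp add: sum_distrib_left power_mult_distrib mult_ac)
  then have "(\<Sum>m<N. x ^ m * e ^ Suc m) * (1 - x * e) = e * ((1 - x * e) * (\<Sum>m<N. (x * e) ^ m))"
    by (simp only: mult_ac)
  also have "\<dots> = e * (1 - (x * e) ^ N)"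
    by (simp only: one_diff_power_eq)
  finally show ?thesis
    by (simp add: power_mult_distrib algebra_simps)
qed

lemma poly_dvd_all_powers_X_eq_0:
  fixes q :: "'a::idom poly"
  assumes "\<And>N. [:0, 1:] ^ N dvd q"
  shows "q = 0"
proof (rule ccontr)
  assume "q \<noteq> 0"
  then have "degree ([:0, 1:] ^ Suc (degree q) :: 'a poly) \<le> degree q"
    using assms dvd_imp_degree_le by blast
  then show False
    by (simp add: degree_power_eq)
qed

section \<open>Expansion in the binomial basis\<close>

lemma unitriangular_system_solvable:
  fixes M :: "nat \<Rightarrow> nat \<Rightarrow> 'a::comm_ring_1"
  assumes upper: "\<And>i j. j < i \<Longrightarrow> i \<le> n \<Longrightarrow> M j i = 0"
    and diag: "\<And>j. j \<le> n \<Longrightarrow> M j j = 1"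
  shows "\<exists>a. (\<forall>i>n. a i = 0) \<and> (\<forall>j\<le>n. (\<Sum>i\<le>n. a i * M j i) = b j)"
proof -
  have "\<exists>a. (\<forall>i\<ge>m. a i = 0) \<and> (\<forall>j<m. (\<Sum>i\<le>n. a i * M j i) = b j)" if "m \<le> Suc n" for m
    using that
  proof (induction m)
    case 0
    show ?case by (intro exI[of _ "\<lambda>_. 0"]) simp
  next
    case (Suc m)
    then obtain a where a_zero: "\<forall>i\<ge>m. a i = 0"
      and a_solves: "\<forall>j<m. (\<Sum>i\<le>n. a i * M j i) = b j"
      by auto
    define d where "d = b m - (\<Sum>i\<le>n. a i * M m i)"
    define a' where "a' i = a i + (if i = m then d else 0)" for i
    have sum_a': "(\<Sum>i\<le>n. a' i * M j i) = (\<Sum>i\<le>n. a i * M j i) + d * M j m" for j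
    proof -
      have "(\<Sum>i\<le>n. a' i * M j i) = (\<Sum>i\<le>n. a i * M j i + (if i = m then d * M j m else 0))"
        by (intro sum.cong) (auto simp: a'_def distrib_right)
      then show ?thesis
        using Suc.prems by (simp add: sum.distrib)
    qed
    have "\<forall>j<Suc m. (\<Sum>i\<le>n. a' i * M j i) = b j"
      using a_solves Suc.prems by (auto simp: sum_a' less_Suc_eq upper diag d_def)
    moreover have "\<forall>i\<ge>Suc m. a' i = 0"
      using a_zero by (simp add: a'_def)
    ultimately show ?case by blast
  qed
  from this[of "Suc n"] show ?thesis
    by (simp add: less_Suc_eq_le Suc_le_eq)
qed

lemma unitriangular_system_unique:
  fixes M :: "nat \<Rightarrow> nat \<Rightarrow> 'a::comm_ring_1"
  assumes upper: "\<And>i j. j < i \<Longrightarrow> i \<le> n \<Longrightarrow> M j i = 0"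
    and diag: "\<And>j. j \<le> n \<Longrightarrow> M j j = 1"
    and homogeneous: "\<forall>j\<le>n. (\<Sum>i\<le>n. a i * M j i) = 0"
    and "k \<le> n"
  shows "a k = 0"
  using \<open>k \<le> n\<close>
proof (induction k rule: less_induct)
  case (less k)
  have "(\<Sum>i\<le>n. a i * M k i) = (\<Sum>i\<le>n. if i = k then a k else 0)"
  proof (intro sum.cong refl)
    fix i assume "i \<in> {..n}"
    then show "a i * M k i = (if i = k then a k else 0)"
      using less by (cases i k rule: linorder_cases) (simp_all add: upper diag)
  qed
  then show ?case
    using homogeneous less.prems by simp
qed

lemma gchoose_shifted_of_nat:
  assumes "i \<le> n"
  shows "(of_nat (Suc j) + of_nat n - of_nat i - 1 :: 'a::field_char_0) gchoose n
       = of_nat ((j + n - i) choose n)"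
proof -
  have "(of_nat (Suc j) + of_nat n - of_nat i - 1 :: 'a) = of_nat (j + n - i)"
    using assms by (simp add: of_nat_diff)
  then show ?thesis
    by (simp add: binomial_gbinomial)
qed

lemma binomial_expansion_at_Suc:
  fixes a :: "nat \<Rightarrow> 'a::field_char_0"
  shows "(\<Sum>k\<le>n. a k * ((of_nat (Suc j) + of_nat n - of_nat k - 1) gchoose n))
       = (\<Sum>k\<le>n. a k * of_nat ((j + n - k) choose n))"
  by (intro sum.cong refl) (auto simp only: atMost_iff gchoose_shifted_of_nat)

lemma binomial_system_solvable:
  "\<exists>a. (\<forall>i>n. a i = 0) \<and>
     (\<forall>j\<le>n. (\<Sum>i\<le>n. a i * of_nat ((j + n - i) choose n)) = (b j :: 'a::comm_ring_1))"
  by (rule unitriangular_system_solvable) (simp_all add: binomial_eq_0)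

lemma binomial_system_unique:
  fixes a :: "nat \<Rightarrow> 'a::comm_ring_1"
  assumes "\<forall>j\<le>n. (\<Sum>i\<le>n. a i * of_nat ((j + n - i) choose n)) = 0" and "k \<le> n"
  shows "a k = 0"
  using assms by (intro unitriangular_system_unique) (simp_all add: binomial_eq_0)

definition binomial_basis :: "nat \<Rightarrow> nat \<Rightarrow> 'a::field_char_0 poly" where
  "binomial_basis n k = smult (inverse (fact n)) (\<Prod>i<n. [:of_nat n - of_nat k - 1 - of_nat i, 1:])"

lemma poly_binomial_basis:
  "poly (binomial_basis n k) y = (y + of_nat n - of_nat k - 1) gchoose n"
  unfolding binomial_basis_def gbinomial_prod_rev by (simp add: poly_prod field_simps lessThan_atLeast0)

lemma degree_binomial_basis: "degree (binomial_basis n k) \<le> n"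
proof -
  have "degree (\<Prod>i<n. [:of_nat n - of_nat k - 1 - of_nat i, 1 :: 'a:])
      \<le> (\<Sum>i<n. degree [:of_nat n - of_nat k - 1 - of_nat i, 1 :: 'a:])"
    using degree_prod_sum_le[of "{..<n}" "\<lambda>i. [:of_nat n - of_nat k - 1 - of_nat i, 1 :: 'a:]"]
    by (simp add: o_def)
  then show ?thesis
    by (simp add: binomial_basis_def)
qed

lemma binomial_expansion_exists:
  fixes q :: "'a::field_char_0 poly"
  assumes "degree q \<le> n"
  shows "\<exists>a. (\<forall>k>n. a k = 0) \<and>
     (\<forall>y. poly q y = (\<Sum>k\<le>n. a k * ((y + of_nat n - of_nat k - 1) gchoose n)))"
proof -
  obtain a where a_zero: "\<forall>k>n. a k = 0"
    and a_interpolates: "\<forall>j\<le>n. (\<Sum>k\<le>n. a k * of_nat ((j + n - k) choose n)) = poly q (of_nat (Suc j))"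
    using binomial_system_solvable[where b = "\<lambda>j. poly q (of_nat (Suc j))"] by blast
  define Q where "Q = (\<Sum>k\<le>n. smult (a k) (binomial_basis n k))"
  have poly_Q: "poly Q y = (\<Sum>k\<le>n. a k * ((y + of_nat n - of_nat k - 1) gchoose n))" for y
    by (simp add: Q_def poly_sum poly_binomial_basis)
  have "degree Q \<le> n"
    unfolding Q_def
    by (intro degree_sum_le order.trans[OF degree_smult_le] degree_binomial_basis) auto
  moreover have "card ((\<lambda>j. of_nat (Suc j) :: 'a) ` {..n}) = Suc n"
    by (subst card_image) (auto simp: inj_on_def)
  moreover have "poly q (of_nat (Suc j)) = poly Q (of_nat (Suc j))" if "j \<le> n" for j
    unfolding poly_Q binomial_expansion_at_Suc using a_interpolates that by simp
  ultimately have "q = Q"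
    using assms by (intro poly_eqI_degree[of "(\<lambda>j. of_nat (Suc j)) ` {..n}"]) auto
  then show ?thesis
    using a_zero poly_Q by blast
qed

lemma binomial_expansion_unique:
  fixes a b :: "nat \<Rightarrow> 'a::field_char_0"
  assumes "\<forall>k>n. a k = 0" "\<forall>k>n. b k = 0"
    and "\<forall>y. (\<Sum>k\<le>n. a k * ((y + of_nat n - of_nat k - 1) gchoose n))
            = (\<Sum>k\<le>n. b k * ((y + of_nat n - of_nat k - 1) gchoose n))"
  shows "a = b"
proof
  fix k
  have "(\<Sum>i\<le>n. a i * of_nat ((j + n - i) choose n)) = (\<Sum>i\<le>n. b i * of_nat ((j + n - i) choose n))"
    for j
    using spec[OF assms(3), of "of_nat (Suc j)"] unfolding binomial_expansion_at_Suc .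
  then have "\<forall>j\<le>n. (\<Sum>i\<le>n. (a i - b i) * of_nat ((j + n - i) choose n)) = 0"
    by (simp add: left_diff_distrib sum_subtractf)
  then have "k \<le> n \<Longrightarrow> a k - b k = 0"
    by (rule binomial_system_unique)
  then show "a k = b k"
    using assms(1,2) by (cases "k \<le> n") auto
qed

lemma poly_eq_eulerian_expansion:
  assumes "degree (p n) \<le> n"
  shows "poly (p n) y = (\<Sum>k\<le>n. eulerian p n k * ((y + of_nat n - of_nat k - 1) gchoose n))"
proof -
  let ?expands = "\<lambda>a. (\<forall>k>n. a k = 0) \<and>
     (\<forall>y. poly (p n) y = (\<Sum>k\<le>n. a k * ((y + of_nat n - of_nat k - 1) gchoose n)))"
  have "\<exists>!a. ?expands a"
  proof (rule ex_ex1I)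
    show "\<exists>a. ?expands a"
      by (rule binomial_expansion_exists[OF assms])
    show "a = b" if "?expands a" "?expands b" for a b
      using binomial_expansion_unique[of n a b] that by simp
  qed
  then have "?expands (eulerian p n)"
    unfolding eulerian_def by (rule theI')
  then show ?thesis
    by blast
qed

section \<open>Sheffer sequences\<close>

lemma degree_sheffer:
  assumes "sheffer g f p"
  shows "degree (p n) \<le> n"
proof -
  define c where "c = inverse (g oo fps_inv f)"
  \<comment> \<open>the coefficient of t^n in the Sheffer generating function, as a polynomial in y\<close>
  define q where "q = smult (fact n)
    (\<Sum>i\<le>n. smult (c $ i) (\<Sum>j\<le>n - i. monom ((fps_inv f ^ j) $ (n - i) / fact j) j))"
  have "poly (p n) y = poly q y" for y
  proof -
    have "Abs_fps (\<lambda>n. poly (p n) y / of_nat (fact n)) $ n = (c * (fps_exp y oo fps_inv f)) $ n"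
      using assms unfolding sheffer_def c_def by metis
    then have "poly (p n) y = fact n * (c * (fps_exp y oo fps_inv f)) $ n"
      by (simp add: field_simps)
    also have "\<dots> = poly q y"
      by (simp add: q_def fps_mult_nth fps_compose_nth poly_sum poly_monom sum_distrib_left
          atLeast0AtMost mult_ac)
    finally show ?thesis .
  qed
  then have "p n = q"
    by (simp add: poly_eq_poly_eq_iff[symmetric] fun_eq_iff)
  moreover have "degree q \<le> n"
    unfolding q_def
    by (intro order.trans[OF degree_smult_le] degree_sum_le order.trans[OF degree_monom_le]) auto
  ultimately show ?thesis
    by simp
qed

lemma sheffer_poly_at_Suc:
  assumes "sheffer g f p"
  shows "poly (p n) (of_nat (Suc m)) = (\<Sum>k\<le>n. eulerian p n k * of_nat ((m + n - k) choose n))"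
proof -
  have "poly (p n) (of_nat (Suc m))
      = (\<Sum>k\<le>n. eulerian p n k * ((of_nat (Suc m) + of_nat n - of_nat k - 1) gchoose n))"
    by (rule poly_eq_eulerian_expansion[OF degree_sheffer[OF assms]])
  also have "\<dots> = (\<Sum>k\<le>n. eulerian p n k * of_nat ((m + n - k) choose n))"
    by (rule binomial_expansion_at_Suc)
  finally show ?thesis .
qed

interpretation const_poly: comm_ring_hom "\<lambda>c::'a::comm_ring_1. [:c:]"
  by unfold_locales simp_all

definition rescale :: "'a::comm_ring_1 fps \<Rightarrow> 'a poly fps" where
  "rescale a = fps_map (\<lambda>c. [:c:]) a oo (fps_const (1 - [:0, 1:]) * fps_X)"

lemma rescale_nth: "rescale a $ n = (1 - [:0, 1:]) ^ n * [:a $ n:]"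
  by (simp add: rescale_def fps_compose_linear)

lemma rescale_mult: "rescale (a * b) = rescale a * rescale (b :: 'a::idom fps)"
  unfolding rescale_def const_poly.fps_map_mult by (rule fps_compose_mult_distrib) simp

lemma rescale_power: "rescale (a ^ m) = rescale (a :: 'a::idom fps) ^ m"
  unfolding rescale_def const_poly.fps_map_power by (rule fps_compose_power[symmetric]) simp

text \<open>Over C[x], E and G stand for e^(fbar((1-x)t)) and g(fbar((1-x)t)).\<close>

locale sheffer_pair =
  fixes g f :: "complex fps" and p :: "nat \<Rightarrow> complex poly"
  assumes g0: "g $ 0 \<noteq> 0" and is_sheffer: "sheffer g f p"
begin

definition E :: "complex poly fps" where
  "E = rescale (fps_exp 1 oo fps_inv f)"

definition G :: "complex poly fps" where
  "G = rescale (g oo fps_inv f)"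

definition egf_at :: "complex \<Rightarrow> complex fps" where
  "egf_at y = Abs_fps (\<lambda>n. poly (p n) y / of_nat (fact n))"

definition partial_sum :: "nat \<Rightarrow> complex poly fps" where
  "partial_sum N =
     (\<Sum>m<N. fps_const ((1 - [:0, 1:]) * [:0, 1:] ^ m) * rescale (egf_at (of_nat (Suc m))))"

definition eulerian_egf :: "complex poly fps" where
  "eulerian_egf = Abs_fps (\<lambda>n. smult (inverse (fact n)) (eulerian_poly p n))"

lemma egf_at_of_nat_mult: "egf_at (of_nat m) * (g oo fps_inv f) = (fps_exp 1 oo fps_inv f) ^ m"
proof -
  have inv_f0: "fps_inv f $ 0 = 0"
    by (simp add: fps_inv_def)
  have "egf_at (of_nat m) = inverse (g oo fps_inv f) * (fps_exp (of_nat m) oo fps_inv f)"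
    using is_sheffer unfolding sheffer_def egf_at_def by blast
  also have "fps_exp (of_nat m) oo fps_inv f = (fps_exp 1 oo fps_inv f) ^ m"
    using inv_f0 by (simp add: fps_exp_power_mult fps_compose_power)
  finally show ?thesis
    using g0 by (simp add: inverse_mult_eq_1)
qed

lemma partial_sum_mult_G:
  "partial_sum N * G = fps_const (1 - [:0, 1:]) * (\<Sum>m<N. fps_const [:0, 1:] ^ m * E ^ Suc m)"
proof -
  have "rescale (egf_at (of_nat (Suc m))) * G = E ^ Suc m" for m
    unfolding G_def E_def by (simp only: egf_at_of_nat_mult flip: rescale_mult rescale_power)
  then show ?thesis
    by (simp add: partial_sum_def sum_distrib_left sum_distrib_right fps_const_power mult.assoc
        flip: fps_const_mult)
qed

lemma partial_sum_telescope:
  "partial_sum N * G * (1 - fps_const [:0, 1:] * E)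
     = fps_const (1 - [:0, 1:]) * (E - fps_const [:0, 1:] ^ N * E ^ Suc N)"
  unfolding partial_sum_mult_G mult.assoc geometric_sum_telescope ..

lemma partial_sum_nth:
  "partial_sum N $ n = smult (inverse (fact n)) (\<Sum>k\<le>n. smult (eulerian p n k)
     ((1 - [:0, 1:]) ^ Suc n * (\<Sum>m<N. of_nat ((m + n - k) choose n) * [:0, 1:] ^ m)))"
proof (rule poly_eq_poly_eq_iff[THEN iffD1], rule ext)
  fix y :: complex
  show "poly (partial_sum N $ n) y = poly (smult (inverse (fact n)) (\<Sum>k\<le>n. smult (eulerian p n k)
     ((1 - [:0, 1:]) ^ Suc n * (\<Sum>m<N. of_nat ((m + n - k) choose n) * [:0, 1:] ^ m)))) y"
  proof -
    have "poly (partial_sum N $ n) y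
        = (\<Sum>m<N. (1 - y) * y ^ m * ((1 - y) ^ n * (poly (p n) (of_nat (Suc m)) / fact n)))"
      by (simp add: partial_sum_def fps_sum_nth rescale_nth egf_at_def poly_sum mult_ac del: of_nat_Suc)
    also have "\<dots> = (\<Sum>m<N. \<Sum>k\<le>n. inverse (fact n) *
        (eulerian p n k * ((1 - y) ^ Suc n * (of_nat ((m + n - k) choose n) * y ^ m))))"
      unfolding sheffer_poly_at_Suc[OF is_sheffer]
      by (intro sum.cong refl) (simp add: sum_distrib_left sum_divide_distrib field_simps)
    also have "\<dots> = (\<Sum>k\<le>n. \<Sum>m<N. inverse (fact n) *
        (eulerian p n k * ((1 - y) ^ Suc n * (of_nat ((m + n - k) choose n) * y ^ m))))"
      by (rule sum.swap)
    finally show ?thesis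
      by (simp add: poly_sum sum_distrib_left)
  qed
qed

lemma X_power_dvd_eulerian_egf_minus_partial_sum:
  "[:0, 1:] ^ N dvd (eulerian_egf - partial_sum N) $ n"
proof -
  have eq: "(eulerian_egf - partial_sum N) $ n = smult (inverse (fact n)) (\<Sum>k\<le>n. smult (eulerian p n k)
     ([:0, 1:] ^ k - (1 - [:0, 1:]) ^ Suc n * (\<Sum>m<N. of_nat ((m + n - k) choose n) * [:0, 1:] ^ m)))"
    by (simp add: eulerian_egf_def eulerian_poly_def partial_sum_nth monom_altdef
        smult_diff_right sum_subtractf)
  show ?thesis
    unfolding eq by (intro dvd_smult dvd_sum shifted_binomial_sum_truncation) simp
qed

lemma eulerian_egf_identity:
  "eulerian_egf * G * (1 - fps_const [:0, 1:] * E) = fps_const (1 - [:0, 1:]) * E"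
proof -
  let ?D = "eulerian_egf * G * (1 - fps_const [:0, 1:] * E) - fps_const (1 - [:0, 1:]) * E"
  have D_eq: "?D = (eulerian_egf - partial_sum N) * (G * (1 - fps_const [:0, 1:] * E))
      - fps_const ((1 - [:0, 1:]) * [:0, 1:] ^ N) * E ^ Suc N" for N
    using partial_sum_telescope[of N] by (simp add: algebra_simps fps_const_power)
  have D_dvd: "[:0, 1:] ^ N dvd ?D $ n" for N n
  proof -
    have "[:0, 1:] ^ N dvd ((eulerian_egf - partial_sum N) * (G * (1 - fps_const [:0, 1:] * E))) $ n"
      unfolding fps_mult_nth by (intro dvd_sum dvd_mult2 X_power_dvd_eulerian_egf_minus_partial_sum)
    moreover have "[:0, 1:] ^ N dvd (fps_const ((1 - [:0, 1:]) * [:0, 1:] ^ N) * E ^ Suc N) $ n"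
      by (simp add: fps_mult_left_const_nth)
    ultimately show ?thesis
      unfolding D_eq[of N] fps_sub_nth by (rule dvd_diff)
  qed
  have "?D $ n = 0" for n
    using D_dvd by (rule poly_dvd_all_powers_X_eq_0)
  then have "?D = 0"
    by (intro fps_ext) (simp only: fps_zero_nth)
  then show ?thesis
    by simp
qed

end

section \<open>Transfer to rational functions\<close>

interpretation to_fract: comm_ring_hom "to_fract :: 'a::idom \<Rightarrow> 'a fract"
  by unfold_locales simp_all

interpretation const_to_fract: field_hom "\<lambda>c::'a::field. to_fract [:c:]"
  by unfold_locales (simp_all only: const_poly.hom_add const_poly.hom_mult to_fract_add
      to_fract_mult flip: one_pCons to_fract_1)

lemma lift_fps_eq_fps_map: "lift_fps a = fps_map (\<lambda>c. to_fract [:c:]) a"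
  by (simp add: lift_fps_def fps_map_def)

lemma lift_fps_exp: "lift_fps (fps_exp 1) = fps_exp 1"
  unfolding lift_fps_eq_fps_map const_to_fract.fps_map_exp by (simp flip: one_pCons)

lemma lift_fps_compose: "lift_fps (a oo b) = lift_fps a oo lift_fps b"
  unfolding lift_fps_eq_fps_map by (rule const_to_fract.fps_map_compose)

lemma to_fract_rescale_compose:
  assumes "b $ 0 = 0"
  shows "fps_map to_fract (rescale (a oo b))
       = lift_fps a oo (lift_fps b oo (fps_const (1 - ratfun_x) * fps_X))"
proof -
  have "fps_map to_fract (rescale (a oo b)) = lift_fps (a oo b) oo (fps_const (1 - ratfun_x) * fps_X)"
    by (simp add: rescale_def to_fract.fps_map_compose to_fract.fps_map_mult to_fract.fps_map_const
        to_fract.fps_map_X fps_map_fps_map lift_fps_eq_fps_map ratfun_x_def o_def)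
  also have "\<dots> = lift_fps a oo lift_fps b oo (fps_const (1 - ratfun_x) * fps_X)"
    by (simp only: lift_fps_compose)
  also have "\<dots> = lift_fps a oo (lift_fps b oo (fps_const (1 - ratfun_x) * fps_X))"
    using assms by (intro fps_compose_assoc[symmetric]) (simp_all add: lift_fps_def)
  finally show ?thesis .
qed

lemma fps_eq_times_inverses:
  fixes a b c d :: "'a::field fps"
  assumes "a * b * c = d" and "b $ 0 \<noteq> 0" and "c $ 0 \<noteq> 0"
  shows "a = d * inverse b * inverse c"
proof -
  have "a = a * (b * inverse b) * (c * inverse c)"
    using assms(2,3) by (simp add: inverse_mult_eq_1')
  also have "\<dots> = d * inverse b * inverse c"
    unfolding assms(1)[symmetric] by (simp only: mult_ac)
  finally show ?thesis .
qed

lemma ratfun_x_neq_1: "ratfun_x \<noteq> 1"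
  unfolding ratfun_x_def to_fract_1[symmetric] to_fract_eq_iff by (simp add: one_pCons)

theorem theorem3p3:
  fixes g f :: "complex fps" and p :: "nat \<Rightarrow> complex poly"
  assumes g0: "g $ 0 \<noteq> 0"
    and f0: "f $ 0 = 0"
    and f1: "f $ 1 \<noteq> 0"
    and shef: "sheffer g f p"
  shows "Abs_fps (\<lambda>n. to_fract (eulerian_poly p n) / of_nat (fact n))
       = (let F = lift_fps (fps_inv f) oo (fps_const (1 - ratfun_x) * fps_X);
              E = fps_exp 1 oo F
          in fps_const (1 - ratfun_x) * E * inverse (lift_fps g oo F)
             * inverse (1 - fps_const ratfun_x * E))"
proof -
  interpret sheffer_pair g f p
    using g0 shef by unfold_locales
  define F where "F = lift_fps (fps_inv f) oo (fps_const (1 - ratfun_x) * fps_X)"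
  have inv_f0: "fps_inv f $ 0 = 0"
    by (simp add: fps_inv_def)
  have E: "fps_map to_fract E = fps_exp 1 oo F"
    using to_fract_rescale_compose[OF inv_f0] by (simp add: E_def F_def lift_fps_exp)
  have G: "fps_map to_fract G = lift_fps g oo F"
    using to_fract_rescale_compose[OF inv_f0] by (simp add: G_def F_def)
  have L: "fps_map to_fract eulerian_egf = Abs_fps (\<lambda>n. to_fract (eulerian_poly p n) / of_nat (fact n))"
  proof -
    have "to_fract (smult (inverse (fact n)) q) = to_fract q / of_nat (fact n)" for n and q :: "complex poly"
    proof -
      have "to_fract (smult (inverse (fact n)) q) = to_fract [:inverse (of_nat (fact n)):] * to_fract q"
        by (simp flip: to_fract_mult)
      also have "to_fract [:inverse (of_nat (fact n)) :: complex:] = inverse (of_nat (fact n))"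
        by (simp only: const_to_fract.hom_inverse const_to_fract.hom_of_nat)
      finally show ?thesis
        by (simp add: divide_inverse mult.commute)
    qed
    then show ?thesis
      by (simp add: eulerian_egf_def fps_eq_iff)
  qed
  have "Abs_fps (\<lambda>n. to_fract (eulerian_poly p n) / of_nat (fact n)) * (lift_fps g oo F)
      * (1 - fps_const ratfun_x * (fps_exp 1 oo F)) = fps_const (1 - ratfun_x) * (fps_exp 1 oo F)"
    using arg_cong[OF eulerian_egf_identity, of "fps_map to_fract"]
    by (simp add: to_fract.fps_map_mult to_fract.fps_map_diff to_fract.fps_map_one
        to_fract.fps_map_const E G L ratfun_x_def)
  moreover have "(lift_fps g oo F) $ 0 \<noteq> 0"
    using g0 by (simp add: lift_fps_def)
  moreover have "(1 - fps_const ratfun_x * (fps_exp 1 oo F)) $ 0 \<noteq> 0"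
    using ratfun_x_neq_1 by (simp add: F_def)
  ultimately show ?thesis
    unfolding Let_def F_def[symmetric] by (rule fps_eq_times_inverses)
qed

end
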